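(* Let $Q_1=(U,R_1)$ be an interval order and $Q_2=(U,R_2)$ a partial order on the same finite set $U$, such that $Q_1$ and $Q_2$ do not contradict each other. Then there exists a linear order $Q_0$ on $U$ that is a linear extension of both $Q_1$ and $Q_2$.
   Context: An interval order is a partial order whose elements $x$ can be assigned real intervals $I_x$ such that $x<y$ iff $I_x$ lies entirely to the left of $I_y$. Two partial orders $Q_1,Q_2$ on $U$ contradict each other if there are $u,v\in U$ with $u<_{Q_1}v$ and $v<_{Q_2}u$. A linear order $Q_0$ is a linear extension of $Q$ if $u<_Q v$ implies $u<_{Q_0}v$. *)

theory Defs
  imports Main "HOL.Real"
begin

text \<open>Orders on a carrier set U are represented by their strict relation
  (pairs (u,v) meaning u < v).\<close>

definition strict_partial_order_on :: "'a set \<Rightarrow> 'a rel \<Rightarrow> bool" where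
  "strict_partial_order_on U R \<longleftrightarrow>
     R \<subseteq> U \<times> U \<and> (\<forall>x\<in>U. (x, x) \<notin> R) \<and> trans R"

definition interval_order_on :: "'a set \<Rightarrow> 'a rel \<Rightarrow> bool" where
  "interval_order_on U R \<longleftrightarrow> strict_partial_order_on U R \<and>
     (\<exists>(l :: 'a \<Rightarrow> real) (r :: 'a \<Rightarrow> real).
        (\<forall>x\<in>U. l x \<le> r x) \<and>
        (\<forall>x\<in>U. \<forall>y\<in>U. (x, y) \<in> R \<longleftrightarrow> r x < l y))"

definition strict_linear_order_on' :: "'a set \<Rightarrow> 'a rel \<Rightarrow> bool" where
  "strict_linear_order_on' U R \<longleftrightarrow> strict_partial_order_on U R \<and>
     (\<forall>x\<in>U. \<forall>y\<in>U. x \<noteq> y \<longrightarrow> (x, y) \<in> R \<or> (y, x) \<in> R)"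

definition contradict :: "'a rel \<Rightarrow> 'a rel \<Rightarrow> bool" where
  "contradict R1 R2 \<longleftrightarrow> (\<exists>u v. (u, v) \<in> R1 \<and> (v, u) \<in> R2)"

definition linear_extension :: "'a rel \<Rightarrow> 'a rel \<Rightarrow> bool" where
  "linear_extension R0 R \<longleftrightarrow> (\<forall>u v. (u, v) \<in> R \<longrightarrow> (u, v) \<in> R0)"

end

theory Submission
  imports Defs
begin

text \<open>An interval order forbids the poset 2+2: of two comparable pairs, one of them is
  comparable across. Together with the absence of contradictions this makes
  \<open>R1 O R2 O R1 \<subseteq> R1\<close>, and from this one checks that
  \<open>R2 \<union> R2\<^sup>= O R1 O R2\<^sup>=\<close> is transitive and irreflexive: it is the strict partial
  order generated by \<open>R1 \<union> R2\<close>. Any linear extension of it extends both orders. On a finite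
  set, a linear extension of a strict partial order is obtained by sorting the elements by
  the number of their predecessors, breaking ties by an arbitrary injective labelling.\<close>

definition two_plus_two_free :: "'a rel \<Rightarrow> bool" where
  "two_plus_two_free R \<longleftrightarrow>
     (\<forall>a b c d. (a, b) \<in> R \<longrightarrow> (c, d) \<in> R \<longrightarrow> (a, d) \<in> R \<or> (c, b) \<in> R)"

lemma interval_order_on_two_plus_two_free:
  assumes "interval_order_on U R"
  shows "two_plus_two_free R"
  unfolding two_plus_two_free_def
proof (intro allI impI)
  fix a b c d assume ab: "(a, b) \<in> R" and cd: "(c, d) \<in> R"
  obtain l r :: "'a \<Rightarrow> real" where lr: "\<forall>x\<in>U. \<forall>y\<in>U. (x, y) \<in> R \<longleftrightarrow> r x < l y"
    using assms unfolding interval_order_on_def by blast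
  have "R \<subseteq> U \<times> U"
    using assms unfolding interval_order_on_def strict_partial_order_on_def by blast
  then have U: "a \<in> U" "b \<in> U" "c \<in> U" "d \<in> U" using ab cd by auto
  have "r a < l b" "r c < l d" using ab cd lr U by auto
  then have "r a < l d \<or> r c < l b" by linarith
  then show "(a, d) \<in> R \<or> (c, b) \<in> R" using lr U by auto
qed

lemma two_plus_two_free_relcomp_subset:
  assumes "two_plus_two_free R1" and "\<not> contradict R1 R2"
  shows "R1 O R2 O R1 \<subseteq> R1"
  using assms unfolding two_plus_two_free_def contradict_def by blast

lemma strict_partial_order_on_join:
  assumes R1: "strict_partial_order_on U R1" and R2: "strict_partial_order_on U R2"
    and absorb: "R1 O R2 O R1 \<subseteq> R1" and "\<not> contradict R1 R2"
  shows "strict_partial_order_on U (R2 \<union> R2\<^sup>= O R1 O R2\<^sup>=)"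
proof -
  have R1_trans: "R1 O R1 \<subseteq> R1" and R2_trans: "R2 O R2 \<subseteq> R2"
    using R1 R2 unfolding strict_partial_order_on_def by (blast dest: trans_O_subset)+
  have "R2\<^sup>= O R2\<^sup>= \<subseteq> R2\<^sup>=" and "R1 O R2\<^sup>= O R1 \<subseteq> R1"
    using R1_trans R2_trans absorb by blast+
  then have "trans (R2 \<union> R2\<^sup>= O R1 O R2\<^sup>=)"
    using R2_trans unfolding trans_def by blast
  moreover have "(x, x) \<notin> R2\<^sup>= O R1 O R2\<^sup>=" if "x \<in> U" for x
    using R1 R2_trans \<open>\<not> contradict R1 R2\<close>
    unfolding strict_partial_order_on_def contradict_def by blast
  ultimately show ?thesis
    using R1 R2 unfolding strict_partial_order_on_def by blast
qed

lemma card_predecessors_strict_mono: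
  assumes "strict_partial_order_on U P" and "finite U" and "(x, y) \<in> P"
  shows "card (P\<inverse> `` {x}) < card (P\<inverse> `` {y})"
proof (rule psubset_card_mono)
  show "finite (P\<inverse> `` {y})"
    using assms(1,2) unfolding strict_partial_order_on_def by (blast intro: finite_subset)
  show "P\<inverse> `` {x} \<subset> P\<inverse> `` {y}"
    using assms(1,3) unfolding strict_partial_order_on_def trans_def by blast
qed

lemma strict_partial_order_on_linear_extension:
  assumes "finite U" and P: "strict_partial_order_on U P"
  shows "\<exists>R0. strict_linear_order_on' U R0 \<and> linear_extension R0 P"
proof -
  obtain g :: "'a \<Rightarrow> nat" where g: "inj_on g U"
    using finite_imp_inj_to_nat_seg[OF \<open>finite U\<close>] by blast
  define h where "h x = card (P\<inverse> `` {x})" for x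
  define R0 where "R0 = {(x, y) \<in> U \<times> U. h x < h y \<or> h x = h y \<and> g x < g y}"
  have "strict_linear_order_on' U R0"
    using g unfolding strict_linear_order_on'_def strict_partial_order_on_def R0_def
    by (auto simp: inj_on_def intro!: transI) (metis nat_neq_iff)
  moreover have "linear_extension R0 P"
    using P card_predecessors_strict_mono[OF P \<open>finite U\<close>]
    unfolding linear_extension_def strict_partial_order_on_def R0_def h_def by blast
  ultimately show ?thesis by blast
qed

theorem lemma10:
  fixes U :: "'a set" and R1 R2 :: "'a rel"
  assumes "finite U"
    and "interval_order_on U R1"
    and "strict_partial_order_on U R2"
    and "\<not> contradict R1 R2"
  shows "\<exists>R0. strict_linear_order_on' U R0 \<and> linear_extension R0 R1 \<and> linear_extension R0 R2"
proof -
  have R1: "strict_partial_order_on U R1"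
    using assms(2) unfolding interval_order_on_def by blast
  have "R1 O R2 O R1 \<subseteq> R1"
    using two_plus_two_free_relcomp_subset interval_order_on_two_plus_two_free assms(2,4) .
  then have "strict_partial_order_on U (R2 \<union> R2\<^sup>= O R1 O R2\<^sup>=)"
    using strict_partial_order_on_join R1 assms(3,4) by blast
  then obtain R0 where "strict_linear_order_on' U R0"
    and "linear_extension R0 (R2 \<union> R2\<^sup>= O R1 O R2\<^sup>=)"
    using strict_partial_order_on_linear_extension assms(1) by blast
  then show ?thesis
    unfolding linear_extension_def by blast
qed

end
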